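(* Let $F\subsetneq K$ be fields of characteristic $0$, with $F$ a proper nonempty subfield of $K$. Let $p(x)=\sum_{k=0}^{n}a_k x^k\in K[x]$ with $a_n\neq 0$, and let $q(x)=\sum_{j=0}^{m}b_j x^j\in F[x]$ with $b_m\neq 0$. Then $D_F(p\circ q)=D_F(p)\,D_F(q)$.
   Context: For sets $F\subset K$ and $p(x)=\sum_{k=0}^{n}a_kx^k\in K[x]$ with $a_n\neq 0$, the $F$ deficit $D_F(p)$ is defined as follows: if $p\in K[x]\setminus F[x]$, then $D_F(p)=n-\max\{0\le k\le n: a_k\notin F\}$; if $p\in F[x]$, then $D_F(p)=n$. Here $F[x]$ denotes the set of polynomials with all coefficients in $F$. *)

theory Defs
  imports "HOL-Computational_Algebra.Polynomial"
begin

definition is_subfield :: "'a::field set \<Rightarrow> bool" where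
  "is_subfield F \<longleftrightarrow> 0 \<in> F \<and> 1 \<in> F \<and>
     (\<forall>x\<in>F. \<forall>y\<in>F. x + y \<in> F) \<and> (\<forall>x\<in>F. - x \<in> F) \<and>
     (\<forall>x\<in>F. \<forall>y\<in>F. x * y \<in> F) \<and> (\<forall>x\<in>F. x \<noteq> 0 \<longrightarrow> inverse x \<in> F)"

definition in_poly_over :: "'a::zero poly \<Rightarrow> 'a set \<Rightarrow> bool" where
  "in_poly_over p F \<longleftrightarrow> (\<forall>k \<le> degree p. coeff p k \<in> F)"

definition deficit :: "'a::zero set \<Rightarrow> 'a poly \<Rightarrow> nat" where
  "deficit F p = (if in_poly_over p F then degree p
                  else degree p - Max {k. k \<le> degree p \<and> coeff p k \<notin> F})"

end

theory Submission
  imports Defs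
begin

text \<open>Split p at the highest index r whose coefficient lies outside F. The part of p above r
  has coefficients in F, hence so does its composition with q. The part up to r has degree r
  and leading coefficient a_r, so its composition with q has degree r m and leading coefficient
  a_r b_m^r, which is not in F because b_m is a nonzero element of F. Hence r m is the highest
  index at which p \<circ> q has a coefficient outside F, and D_F(p \<circ> q) = n m - r m =
  D_F(p) D_F(q).\<close>

definition coeffs_in :: "'a::zero set \<Rightarrow> 'a poly \<Rightarrow> bool" where
  "coeffs_in F p \<longleftrightarrow> (\<forall>k. coeff p k \<in> F)"

context
  fixes F :: "'a::field set"
  assumes subfield: "is_subfield F"
begin

lemma subfield_zero: "0 \<in> F"
  and subfield_one: "1 \<in> F"
  and subfield_add: "x \<in> F \<Longrightarrow> y \<in> F \<Longrightarrow> x + y \<in> F"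
  and subfield_uminus: "x \<in> F \<Longrightarrow> - x \<in> F"
  and subfield_mult: "x \<in> F \<Longrightarrow> y \<in> F \<Longrightarrow> x * y \<in> F"
  and subfield_inverse: "x \<in> F \<Longrightarrow> inverse x \<in> F"
  using subfield unfolding is_subfield_def by (auto simp: inverse_eq_imp_eq)

lemma subfield_sum: "(\<And>i. i \<in> A \<Longrightarrow> f i \<in> F) \<Longrightarrow> sum f A \<in> F"
  by (induction A rule: infinite_finite_induct) (auto intro: subfield_zero subfield_add)

lemma subfield_power: "x \<in> F \<Longrightarrow> x ^ n \<in> F"
  by (induction n) (auto intro: subfield_one subfield_mult)

lemma subfield_add_notin: "x \<notin> F \<Longrightarrow> y \<in> F \<Longrightarrow> x + y \<notin> F"
  by (metis add_diff_cancel diff_conv_add_uminus subfield_add subfield_uminus)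

lemma subfield_mult_notin: "x \<notin> F \<Longrightarrow> y \<in> F \<Longrightarrow> y \<noteq> 0 \<Longrightarrow> x * y \<notin> F"
  by (metis nonzero_mult_div_cancel_right divide_inverse subfield_inverse subfield_mult)

lemma in_poly_over_iff_coeffs_in: "in_poly_over p F \<longleftrightarrow> coeffs_in F p"
  unfolding in_poly_over_def coeffs_in_def
  by (metis coeff_eq_0 not_le subfield_zero)

lemma coeffs_in_add: "coeffs_in F p \<Longrightarrow> coeffs_in F q \<Longrightarrow> coeffs_in F (p + q)"
  unfolding coeffs_in_def by (simp add: subfield_add)

lemma coeffs_in_mult: "coeffs_in F p \<Longrightarrow> coeffs_in F q \<Longrightarrow> coeffs_in F (p * q)"
  unfolding coeffs_in_def coeff_mult by (auto intro!: subfield_sum subfield_mult)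

lemma coeffs_in_pCons: "coeffs_in F (pCons a p) \<longleftrightarrow> a \<in> F \<and> coeffs_in F p"
  unfolding coeffs_in_def by (metis coeff_pCons_0 coeff_pCons_Suc not0_implies_Suc)

lemma coeffs_in_pcompose:
  assumes "coeffs_in F p" and "coeffs_in F q"
  shows "coeffs_in F (pcompose p q)"
  using assms(1)
proof (induction p)
  case 0
  show ?case by (simp add: coeffs_in_def subfield_zero)
next
  case (pCons a p)
  then have "a \<in> F" "coeffs_in F p" by (simp_all add: coeffs_in_pCons)
  then have "coeffs_in F [:a:]" "coeffs_in F p"
    by (simp_all add: coeffs_in_pCons coeffs_in_def[of F 0] subfield_zero)
  with pCons.IH assms(2) show ?case
    by (simp add: pcompose_pCons coeffs_in_add coeffs_in_mult)
qed

lemma obtain_top_coeff_notin: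
  assumes "\<not> coeffs_in F p"
  obtains r where "coeff p r \<notin> F" and "\<And>k. r < k \<Longrightarrow> coeff p k \<in> F"
proof -
  define A where "A = {k. coeff p k \<notin> F}"
  have "A \<subseteq> {..degree p}"
    unfolding A_def using subfield_zero by (auto intro: le_degree)
  then have finite: "finite A" by (rule finite_subset) simp
  have nonempty: "A \<noteq> {}" using assms unfolding A_def coeffs_in_def by blast
  show thesis
  proof (rule that)
    show "coeff p (Max A) \<notin> F"
      using Max_in[OF finite nonempty] by (simp add: A_def)
    show "coeff p k \<in> F" if "Max A < k" for k
      using Max_ge[OF finite, of k] that by (auto simp: A_def)
  qed
qed

lemma deficit_eq_diff_top_coeff_notin:
  assumes "coeff p r \<notin> F" and "\<And>k. r < k \<Longrightarrow> coeff p k \<in> F"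
  shows "deficit F p = degree p - r"
proof -
  define A where "A = {k. k \<le> degree p \<and> coeff p k \<notin> F}"
  have "r \<le> degree p" using assms(1) subfield_zero by (auto intro: le_degree)
  then have "Max A = r"
    unfolding A_def using assms by (intro Max_eqI) (auto simp: not_le[symmetric])
  moreover have "\<not> in_poly_over p F"
    using assms(1) in_poly_over_iff_coeffs_in coeffs_in_def by blast
  ultimately show ?thesis unfolding deficit_def A_def by simp
qed

lemma pcompose_top_coeff_notin:
  assumes q: "coeffs_in F q" "degree q > 0"
    and r: "coeff p r \<notin> F" "\<And>k. r < k \<Longrightarrow> coeff p k \<in> F"
  shows "coeff (pcompose p q) (r * degree q) \<notin> F"
    and "\<And>k. r * degree q < k \<Longrightarrow> coeff (pcompose p q) k \<in> F"
proof -
  define low where "low = poly_cutoff (Suc r) p"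
  have coeff_low: "coeff low k = (if k \<le> r then coeff p k else 0)" for k
    unfolding low_def coeff_poly_cutoff by auto
  have "coeff p r \<noteq> 0" using r(1) subfield_zero by auto
  then have degree_low: "degree low = r"
    by (intro antisym degree_le le_degree) (auto simp: coeff_low)
  have high: "coeffs_in F (pcompose (p - low) q)"
    using r(2) subfield_zero q(1)
    by (intro coeffs_in_pcompose) (auto simp: coeffs_in_def coeff_low not_le)
  have split: "coeff (pcompose p q) k = coeff (pcompose low q) k + coeff (pcompose (p - low) q) k"
    for k by (simp add: pcompose_diff flip: coeff_add)
  have "lead_coeff q \<in> F" "lead_coeff q \<noteq> 0"
    using q by (auto simp: coeffs_in_def)
  then have "coeff p r * lead_coeff q ^ r \<notin> F"
    using r(1) by (simp add: subfield_mult_notin subfield_power)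
  moreover have "coeff (pcompose low q) (r * degree q) = coeff p r * lead_coeff q ^ r"
    using lead_coeff_comp[OF q(2), of low] by (simp add: degree_pcompose degree_low coeff_low)
  ultimately show "coeff (pcompose p q) (r * degree q) \<notin> F"
    using high split subfield_add_notin coeffs_in_def by metis
  show "coeff (pcompose p q) k \<in> F" if "r * degree q < k" for k
    using high split that by (simp add: coeffs_in_def coeff_eq_0 degree_pcompose degree_low)
qed

end

theorem theorem5:
  fixes F :: "'a::field_char_0 set" and p q :: "'a poly"
  assumes "is_subfield F" and "F \<noteq> UNIV"
    and "p \<noteq> 0" and "q \<noteq> 0" and "in_poly_over q F"
  shows "deficit F (pcompose p q) = deficit F p * deficit F q"
proof -
  note subfield = assms(1)
  have q: "coeffs_in F q" using assms(5) in_poly_over_iff_coeffs_in[OF subfield] by blast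
  then have deficit_q: "deficit F q = degree q" using assms(5) by (simp add: deficit_def)
  consider (q_constant) "degree q = 0" | (p_over_F) "coeffs_in F p"
    | (general) "degree q > 0" "\<not> coeffs_in F p"
    by blast
  then show ?thesis
  proof cases
    case q_constant
    then show ?thesis by (simp add: deficit_q deficit_def degree_pcompose)
  next
    case p_over_F
    then have "in_poly_over p F" "in_poly_over (pcompose p q) F"
      using coeffs_in_pcompose[OF subfield p_over_F q] in_poly_over_iff_coeffs_in[OF subfield] by blast+
    then show ?thesis using assms(5) by (simp add: deficit_def degree_pcompose)
  next
    case general
    obtain r where r: "coeff p r \<notin> F" "\<And>k. r < k \<Longrightarrow> coeff p k \<in> F"
      using obtain_top_coeff_notin[OF subfield general(2)] by blast
    have "deficit F (pcompose p q) = degree p * degree q - r * degree q"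
      using deficit_eq_diff_top_coeff_notin[OF subfield pcompose_top_coeff_notin[OF subfield q general(1) r]]
      by (simp add: degree_pcompose)
    also have "\<dots> = deficit F p * deficit F q"
      using deficit_eq_diff_top_coeff_notin[OF subfield r] by (simp add: deficit_q diff_mult_distrib)
    finally show ?thesis .
  qed
qed

end
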